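(* Assume $G$ is simply laced. Let $\varpi$ be a minuscule fundamental weight, $\bar\phi\in W/W_{P_\varpi}$, $\phi$ the minimal length element of $\bar\phi$, $\phi=s_{\gamma_1}\cdots s_{\gamma_n}$ a reduced expression with simple roots $\gamma_k$, $\beta_k=i(\gamma_k)$, $\alpha_1=\beta_1$ and $\alpha_k=s_{\beta_1}\cdots s_{\beta_{k-1}}(\beta_k)$. Let $i,x\in[1,n]$ with $\langle\alpha_i^\vee,\alpha_x\rangle=1$. Then for all $j\in[1,n]$, $\langle\alpha_i^\vee,s_{\alpha_x}(\alpha_j)\rangle\ge -1$.
   Context: $G$ is a semisimple algebraic group with maximal torus $T$, Borel subgroup $B$, simple roots $S$, Weyl group $W$ with longest element $w_0$; $s_\alpha$ is the reflection and $\alpha^\vee$ the coroot of a root $\alpha$. The Weyl involution $i$ sends a simple root $\gamma$ to $-w_0(\gamma)$. A fundamental weight $\varpi$ is minuscule if $\langle\alpha^\vee,\varpi\rangle\le1$ for all positive roots $\alpha$; $P_\varpi$ is the associated maximal parabolic subgroup and $W_{P_\varpi}$ its Weyl group. *)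

theory Defs
  imports "HOL-Analysis.Analysis"
begin

text \<open>Root data of a semisimple group, realised as an abstract root system in a
Euclidean space whose inner product is W-invariant (Bourbaki's setting).\<close>

definition cpair :: "'a::euclidean_space \<Rightarrow> 'a \<Rightarrow> real" where
  "cpair \<alpha> v = 2 * (\<alpha> \<bullet> v) / (\<alpha> \<bullet> \<alpha>)"

definition refl :: "'a::euclidean_space \<Rightarrow> 'a \<Rightarrow> 'a" where
  "refl \<alpha> v = v - cpair \<alpha> v *\<^sub>R \<alpha>"

definition root_system :: "'a::euclidean_space set \<Rightarrow> bool" where
  "root_system R \<longleftrightarrow> finite R \<and> 0 \<notin> R \<and> span R = UNIV \<and>
     (\<forall>\<alpha>\<in>R. refl \<alpha> ` R = R) \<and>
     (\<forall>\<alpha>\<in>R. \<forall>\<beta>\<in>R. cpair \<alpha> \<beta> \<in> \<int>) \<and>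
     (\<forall>\<alpha>\<in>R. \<forall>c. c *\<^sub>R \<alpha> \<in> R \<longrightarrow> c = 1 \<or> c = -1)"

definition simply_laced :: "'a::euclidean_space set \<Rightarrow> bool" where
  "simply_laced R \<longleftrightarrow> (\<forall>\<alpha>\<in>R. \<forall>\<beta>\<in>R. \<beta> \<noteq> \<alpha> \<and> \<beta> \<noteq> -\<alpha> \<longrightarrow> \<bar>cpair \<alpha> \<beta>\<bar> \<le> 1)"

definition nonneg_comb :: "'a::euclidean_space set \<Rightarrow> 'a \<Rightarrow> bool" where
  "nonneg_comb S v \<longleftrightarrow> (\<exists>c::'a \<Rightarrow> int. (\<forall>\<gamma>\<in>S. c \<gamma> \<ge> 0) \<and> v = (\<Sum>\<gamma>\<in>S. of_int (c \<gamma>) *\<^sub>R \<gamma>))"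

definition is_base :: "'a::euclidean_space set \<Rightarrow> 'a set \<Rightarrow> bool" where
  "is_base R S \<longleftrightarrow> S \<subseteq> R \<and> independent S \<and>
     (\<forall>\<alpha>\<in>R. nonneg_comb S \<alpha> \<or> nonneg_comb S (-\<alpha>))"

definition pos_roots :: "'a::euclidean_space set \<Rightarrow> 'a set \<Rightarrow> 'a set" where
  "pos_roots R S = {\<alpha>\<in>R. nonneg_comb S \<alpha>}"

inductive_set gen_group :: "('a \<Rightarrow> 'a) set \<Rightarrow> ('a \<Rightarrow> 'a) set" for gens where
  gen_id: "id \<in> gen_group gens"
| gen_step: "g \<in> gens \<Longrightarrow> w \<in> gen_group gens \<Longrightarrow> g \<circ> w \<in> gen_group gens"

definition weyl :: "'a::euclidean_space set \<Rightarrow> ('a \<Rightarrow> 'a) set" where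
  "weyl R = gen_group (refl ` R)"

definition compose_refl :: "'a::euclidean_space list \<Rightarrow> 'a \<Rightarrow> 'a" where
  "compose_refl gs = foldr (\<lambda>\<gamma> f. refl \<gamma> \<circ> f) gs id"

definition weyl_length :: "'a::euclidean_space set \<Rightarrow> ('a \<Rightarrow> 'a) \<Rightarrow> nat" where
  "weyl_length S w = (LEAST n. \<exists>gs. set gs \<subseteq> S \<and> length gs = n \<and> w = compose_refl gs)"

definition minuscule_fund_weight :: "'a::euclidean_space set \<Rightarrow> 'a set \<Rightarrow> 'a \<Rightarrow> 'a \<Rightarrow> bool" where
  "minuscule_fund_weight R S \<delta> \<omega> \<longleftrightarrow> \<delta> \<in> S \<and> cpair \<delta> \<omega> = 1 \<and>
     (\<forall>\<gamma>\<in>S. \<gamma> \<noteq> \<delta> \<longrightarrow> cpair \<gamma> \<omega> = 0) \<and>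
     (\<forall>\<alpha>\<in>pos_roots R S. cpair \<alpha> \<omega> \<le> 1)"

text \<open>W_{P_\<omega>}: generated by the simple reflections fixing \<omega>.\<close>
definition parabolic_weyl :: "'a::euclidean_space set \<Rightarrow> 'a \<Rightarrow> ('a \<Rightarrow> 'a) set" where
  "parabolic_weyl S \<delta> = gen_group (refl ` (S - {\<delta>}))"

definition left_coset :: "('a \<Rightarrow> 'a) \<Rightarrow> ('a \<Rightarrow> 'a) set \<Rightarrow> ('a \<Rightarrow> 'a) set" where
  "left_coset w H = (\<lambda>u. w \<circ> u) ` H"

end

theory Submission
  imports Defs
begin

(* Put psi_k = s_{gamma_n} ... s_{gamma_(k+1)} (gamma_k).  Then alpha_k = w0 (phi psi_k), and w0 phi
   is orthogonal, so the claim is a statement about the pairings of the psi_k.  Since the expression of phi is reduced, every psi_k is a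
   positive root; since phi is minimal in phi W_P, its delta-coefficient is positive, for otherwise
   s_{psi_k} lies in W_P and phi s_{psi_k} has a shorter expression.  So all psi_k are roots of the
   unipotent radical of P.  In a simply laced system these roots all have the length of delta, and
   two of them never pair negatively: if <p^v, q> = -1 then p + q is such a root with
   <(p + q)^v, varpi> >= 2, contradicting minusculity.  Hence
   <alpha_i^v, s_{alpha_x} alpha_j> = <alpha_i^v, alpha_j> - <alpha_x^v, alpha_j> >= 0 - 1. *)

lemma cpair_diff_right: "cpair a (u - v) = cpair a u - cpair a v"
  by (simp add: cpair_def inner_diff_right diff_divide_distrib)

lemma cpair_scaleR_right: "cpair a (c *\<^sub>R v) = c * cpair a v"
  by (simp add: cpair_def)

lemma cpair_self: "a \<noteq> 0 \<Longrightarrow> cpair a a = 2"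
  by (simp add: cpair_def)

lemma inner_self_eq_if_cpair_eq:
  "cpair a b = cpair b a \<Longrightarrow> a \<bullet> b \<noteq> 0 \<Longrightarrow> a \<bullet> a = b \<bullet> b"
  by (auto simp: cpair_def inner_commute field_simps split: if_splits)

lemma refl_self: "refl a a = - a"
  by (cases "a = 0") (simp_all add: refl_def cpair_self scaleR_2 algebra_simps)

lemma refl_refl [simp]: "refl a (refl a v) = v"
  by (cases "a = 0") (auto simp: refl_def cpair_def inner_diff_right field_simps)

lemma refl_neg [simp]: "refl (- a) = refl a"
  by (rule ext) (simp add: refl_def cpair_def)

lemma inner_refl [simp]: "refl a u \<bullet> refl a v = u \<bullet> v"
  by (cases "a = 0")
    (auto simp: refl_def cpair_def inner_diff_left inner_diff_right inner_commute field_simps)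

lemma linear_refl: "linear (refl a)"
  unfolding refl_def cpair_def
  by (rule linearI) (simp_all add: inner_add_right algebra_simps add_divide_distrib)

lemma orthogonal_transformation_refl: "orthogonal_transformation (refl a)"
  by (simp add: orthogonal_transformation_def linear_refl)

lemma orthogonal_transformation_cpair:
  "orthogonal_transformation f \<Longrightarrow> cpair (f a) (f b) = cpair a b"
  by (simp add: orthogonal_transformation_def cpair_def)

lemma orthogonal_transformation_refl_conj:
  assumes "orthogonal_transformation f"
  shows "f (refl a v) = refl (f a) (f v)"
  using assms orthogonal_transformation_cpair[OF assms]
  by (simp add: refl_def orthogonal_transformation_def linear_diff linear_scale)

lemma refl_refl_conj: "refl (refl a b) = refl a \<circ> refl b \<circ> refl a"
proof
  fix u
  show "refl (refl a b) u = (refl a \<circ> refl b \<circ> refl a) u"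
    using orthogonal_transformation_refl_conj[OF orthogonal_transformation_refl, of a b "refl a u"]
    by simp
qed

lemma orthogonal_transformation_refl_comp:
  "orthogonal_transformation f \<Longrightarrow> orthogonal_transformation (refl a \<circ> f)"
  by (rule orthogonal_transformation_compose[OF orthogonal_transformation_refl])

lemma compose_refl_Nil [simp]: "compose_refl [] = id"
  by (simp add: compose_refl_def)

lemma compose_refl_Cons [simp]: "compose_refl (g # gs) = refl g \<circ> compose_refl gs"
  by (simp add: compose_refl_def)

lemma compose_refl_append: "compose_refl (xs @ ys) = compose_refl xs \<circ> compose_refl ys"
  by (induction xs) auto

lemma compose_refl_rev_inverse [simp]: "compose_refl (rev gs) (compose_refl gs v) = v"
  by (induction gs arbitrary: v) (auto simp: compose_refl_append)

lemma compose_refl_inverse_rev [simp]: "compose_refl gs (compose_refl (rev gs) v) = v"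
  using compose_refl_rev_inverse[of "rev gs"] by simp

lemma orthogonal_transformation_compose_refl: "orthogonal_transformation (compose_refl gs)"
  by (induction gs) (simp_all add: id_def orthogonal_transformation_refl_comp del: o_apply)

lemma compose_refl_conj: "compose_refl gs (refl v u) = refl (compose_refl gs v) (compose_refl gs u)"
  by (rule orthogonal_transformation_refl_conj[OF orthogonal_transformation_compose_refl])

lemma compose_refl_deletion:
  "compose_refl xs v = g \<Longrightarrow> compose_refl (g # xs @ v # ys) = compose_refl (xs @ ys)"
  by (simp add: compose_refl_append fun_eq_iff compose_refl_conj)

lemma compose_refl_comp_refl_inversion:
  "compose_refl (xs @ g # ys) \<circ> refl (compose_refl (rev ys) g) = compose_refl (xs @ ys)"
  by (simp add: compose_refl_append fun_eq_iff compose_refl_conj)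

lemma compose_refl_map_neg:
  "orthogonal_transformation f \<Longrightarrow>
     compose_refl (map (\<lambda>g. - f g) gs) (f v) = f (compose_refl gs v)"
  by (induction gs arbitrary: v) (simp_all add: orthogonal_transformation_refl_conj)

lemma compose_refl_map_neg_nth:
  assumes "orthogonal_transformation f" "k < length gs"
  shows "compose_refl (take k (map (\<lambda>g. - f g) gs)) (map (\<lambda>g. - f g) gs ! k) =
    f (compose_refl gs (compose_refl (rev (drop (Suc k) gs)) (gs ! k)))"
proof -
  have "compose_refl gs (compose_refl (rev (drop (Suc k) gs)) (gs ! k)) =
      compose_refl (take k gs) (- (gs ! k))"
    by (subst (1) id_take_nth_drop[OF assms(2)]) (simp add: compose_refl_append refl_self)
  moreover have "- f (gs ! k) = f (- (gs ! k))"
    using assms(1) by (simp add: orthogonal_transformation_linear linear_neg)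
  ultimately show ?thesis
    using assms by (simp add: take_map compose_refl_map_neg)
qed

lemma gen_group_comp: "u \<in> gen_group G \<Longrightarrow> v \<in> gen_group G \<Longrightarrow> u \<circ> v \<in> gen_group G"
  by (induction rule: gen_group.induct) (auto simp: comp_assoc intro: gen_group.intros)

lemma gen_group_gen: "g \<in> G \<Longrightarrow> g \<in> gen_group G"
  using gen_group.gen_step[OF _ gen_group.gen_id] by fastforce

lemma left_coset_gen_group_comp:
  "f \<in> left_coset w (gen_group G) \<Longrightarrow> u \<in> gen_group G \<Longrightarrow>
     f \<circ> u \<in> left_coset w (gen_group G)"
  unfolding left_coset_def by (auto simp: comp_assoc intro: gen_group_comp)

lemma orthogonal_transformation_weyl: "w \<in> weyl R \<Longrightarrow> orthogonal_transformation w"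
  unfolding weyl_def
  by (induction rule: gen_group.induct)
    (auto simp: id_def intro: orthogonal_transformation_refl_comp simp del: o_apply)

lemma weyl_length_le: "set hs \<subseteq> S \<Longrightarrow> weyl_length S (compose_refl hs) \<le> length hs"
  unfolding weyl_length_def by (rule Least_le) blast

lemma finite_measure_induct [consumes 2, case_names less]:
  fixes f :: "'a \<Rightarrow> 'b::linorder"
  assumes "finite A" "x \<in> A"
    and "\<And>x. x \<in> A \<Longrightarrow> (\<And>y. y \<in> A \<Longrightarrow> f y < f x \<Longrightarrow> P y) \<Longrightarrow> P x"
  shows "P x"
  using assms(2)
proof (induction x rule: measure_induct_rule[where f = "\<lambda>x. card {y \<in> A. f y < f x}"])
  case (less x)
  show ?case
  proof (rule assms(3)[OF less.prems])
    fix y assume "y \<in> A" "f y < f x"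
    then have "{z \<in> A. f z < f y} \<subset> {z \<in> A. f z < f x}" by auto
    then have "card {z \<in> A. f z < f y} < card {z \<in> A. f z < f x}"
      using assms(1) by (intro psubset_card_mono) auto
    then show "P y" using less.IH \<open>y \<in> A\<close> by blast
  qed
qed

lemma representation_comb:
  assumes "independent S" "finite S" "g \<in> S"
  shows "representation S (\<Sum>\<gamma>\<in>S. c \<gamma> *\<^sub>R \<gamma>) g = c g"
proof -
  have "representation S (\<Sum>\<gamma>\<in>S. c \<gamma> *\<^sub>R \<gamma>) g = (\<Sum>\<gamma>\<in>S. c \<gamma> * representation S \<gamma> g)"
    using assms(1) by (simp add: real_vector.representation_sum real_vector.representation_scale
        span_base span_scale)
  also have "\<dots> = (\<Sum>\<gamma>\<in>S. if \<gamma> = g then c \<gamma> else 0)"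
    using assms(1) by (intro sum.cong) (auto simp: real_vector.representation_basis)
  finally show ?thesis
    using assms(2,3) by simp
qed

lemma nonneg_comb_add:
  assumes "nonneg_comb S u" "nonneg_comb S v"
  shows "nonneg_comb S (u + v)"
proof -
  obtain c d :: "'a \<Rightarrow> int" where "\<forall>\<gamma>\<in>S. c \<gamma> \<ge> 0" "u = (\<Sum>\<gamma>\<in>S. of_int (c \<gamma>) *\<^sub>R \<gamma>)"
    and "\<forall>\<gamma>\<in>S. d \<gamma> \<ge> 0" "v = (\<Sum>\<gamma>\<in>S. of_int (d \<gamma>) *\<^sub>R \<gamma>)"
    using assms unfolding nonneg_comb_def by blast
  then show ?thesis
    unfolding nonneg_comb_def
    by (intro exI[of _ "\<lambda>\<gamma>. c \<gamma> + d \<gamma>"]) (simp add: sum.distrib scaleR_add_left)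
qed

lemma nonneg_comb_base:
  assumes "finite S" "g \<in> S"
  shows "nonneg_comb S g"
proof -
  have "(\<Sum>\<gamma>\<in>S. of_int (if \<gamma> = g then 1 else 0) *\<^sub>R \<gamma>) = (\<Sum>\<gamma>\<in>S. if \<gamma> = g then g else 0)"
    by (intro sum.cong) auto
  also have "\<dots> = g"
    using assms by simp
  finally show ?thesis
    unfolding nonneg_comb_def by (intro exI[of _ "\<lambda>\<gamma>. if \<gamma> = g then 1 else 0"]) auto
qed

definition height :: "'a::euclidean_space set \<Rightarrow> 'a \<Rightarrow> real" where
  "height S v = (\<Sum>g\<in>S. representation S v g)"

locale based_root_system =
  fixes R S :: "'a::euclidean_space set"
  assumes root_system: "root_system R" and base: "is_base R S"
begin

lemma finite_roots: "finite R" and zero_not_root: "0 \<notin> R"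
  and refl_root: "a \<in> R \<Longrightarrow> b \<in> R \<Longrightarrow> refl a b \<in> R"
  and cpair_Ints: "a \<in> R \<Longrightarrow> b \<in> R \<Longrightarrow> cpair a b \<in> \<int>"
  and reduced: "a \<in> R \<Longrightarrow> c *\<^sub>R a \<in> R \<Longrightarrow> c = 1 \<or> c = -1"
  using root_system unfolding root_system_def by blast+

lemma simple_roots_subset: "S \<subseteq> R" and independent_simple_roots: "independent S"
  and root_cases: "a \<in> R \<Longrightarrow> nonneg_comb S a \<or> nonneg_comb S (- a)"
  using base unfolding is_base_def by blast+

lemma finite_simple_roots: "finite S"
  using finite_subset[OF simple_roots_subset finite_roots] .

lemma inner_root_pos: "a \<in> R \<Longrightarrow> 0 < a \<bullet> a"
  using zero_not_root by auto

lemma cpair_root_self: "a \<in> R \<Longrightarrow> cpair a a = 2"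
  by (rule cpair_self) (use zero_not_root in blast)

lemma cpair_simply_laced:
  assumes "simply_laced R" "a \<in> R" "b \<in> R" "b \<noteq> a" "b \<noteq> - a"
  shows "cpair a b = sgn (a \<bullet> b)"
proof -
  obtain k :: int where "cpair a b = k"
    using cpair_Ints[OF assms(2,3)] by (auto elim: Ints_cases)
  moreover have "\<bar>cpair a b\<bar> \<le> 1"
    using assms unfolding simply_laced_def by blast
  ultimately have "cpair a b = sgn (cpair a b)"
    by (cases "k < 0"; cases "k > 0") auto
  also have "\<dots> = sgn (a \<bullet> b)"
    using inner_root_pos[OF assms(2)] by (simp add: cpair_def sgn_mult)
  finally show ?thesis .
qed

lemma span_simple_roots: "span S = UNIV"
proof -
  have comb_span: "nonneg_comb S v \<Longrightarrow> v \<in> span S" for v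
    unfolding nonneg_comb_def by (auto intro: span_sum span_scale span_base)
  have "a \<in> span S" if "a \<in> R" for a
    using root_cases[OF that] comb_span span_neg[of "- a" S] by auto
  then have "span R \<subseteq> span S"
    by (intro span_minimal subspace_span) auto
  then show ?thesis
    using root_system unfolding root_system_def by auto
qed

lemma representation_diff: "representation S (u - v) g = representation S u g - representation S v g"
  and representation_add: "representation S (u + v) g = representation S u g + representation S v g"
  and representation_neg: "representation S (- v) g = - representation S v g"
  and representation_scaleR: "representation S (c *\<^sub>R v) g = c * representation S v g"
  using independent_simple_roots
  by (simp_all add: span_simple_roots real_vector.representation_diff real_vector.representation_add
      real_vector.representation_neg real_vector.representation_scale)

lemma representation_simple_root:
  "h \<in> S \<Longrightarrow> representation S h g = (if g = h then 1 else 0)"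
  using independent_simple_roots by (simp add: real_vector.representation_basis)

lemma sum_representation: "(\<Sum>g\<in>S. representation S v g *\<^sub>R g) = v"
  using independent_simple_roots finite_simple_roots
  by (simp add: real_vector.sum_representation_eq span_simple_roots)

lemma representation_refl_simple_root:
  "g \<in> S \<Longrightarrow> h \<in> S \<Longrightarrow> h \<noteq> g \<Longrightarrow> representation S (refl g v) h = representation S v h"
  by (simp add: refl_def representation_diff representation_scaleR representation_simple_root)

lemma height_simple_root: "h \<in> S \<Longrightarrow> height S h = 1"
  using finite_simple_roots by (simp add: height_def representation_simple_root)

lemma height_refl_simple_root:
  "g \<in> S \<Longrightarrow> height S (refl g v) = height S v - cpair g v"
  by (simp add: height_def refl_def representation_diff representation_scaleR sum_subtractf
      sum_distrib_left[symmetric] height_simple_root[unfolded height_def])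

lemma height_refl_simple_root_less:
  assumes "g \<in> S" "0 < g \<bullet> p"
  shows "height S (refl g p) < height S p"
proof -
  have "g \<noteq> 0"
    using assms(2) by auto
  then have "0 < g \<bullet> g"
    by simp
  then have "0 < cpair g p"
    using assms(2) by (simp add: cpair_def)
  then show ?thesis
    using height_refl_simple_root[OF assms(1)] by simp
qed

lemma representation_nonneg_comb:
  assumes "nonneg_comb S v" "g \<in> S"
  shows "representation S v g \<in> \<nat>"
proof -
  obtain c :: "'a \<Rightarrow> int" where "\<forall>\<gamma>\<in>S. c \<gamma> \<ge> 0" "v = (\<Sum>\<gamma>\<in>S. of_int (c \<gamma>) *\<^sub>R \<gamma>)"
    using assms(1) unfolding nonneg_comb_def by blast
  then have "representation S v g = of_nat (nat (c g))"
    using representation_comb[OF independent_simple_roots finite_simple_roots assms(2)] assms(2)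
    by simp
  then show ?thesis by simp
qed

lemma representation_pos_root_Nats:
  "p \<in> pos_roots R S \<Longrightarrow> g \<in> S \<Longrightarrow> representation S p g \<in> \<nat>"
  using representation_nonneg_comb by (simp add: pos_roots_def)

lemma representation_pos_root_nonneg:
  "p \<in> pos_roots R S \<Longrightarrow> g \<in> S \<Longrightarrow> 0 \<le> representation S p g"
  using representation_pos_root_Nats by (metis Nats_cases of_nat_0_le_iff)

lemma representation_pos_root_ge_1:
  assumes "p \<in> pos_roots R S" "g \<in> S" "0 < representation S p g"
  shows "1 \<le> representation S p g"
proof -
  obtain k :: nat where "representation S p g = k"
    using representation_pos_root_Nats[OF assms(1,2)] by (auto elim: Nats_cases)
  then show ?thesis using assms(3) by simp
qed

lemma simple_root_pos: "g \<in> S \<Longrightarrow> g \<in> pos_roots R S"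
  using simple_roots_subset nonneg_comb_base[OF finite_simple_roots] by (auto simp: pos_roots_def)

lemma finite_pos_roots: "finite (pos_roots R S)"
  using finite_roots by (simp add: pos_roots_def)

lemma refl_simple_root_pos:
  assumes g: "g \<in> S" and p: "p \<in> pos_roots R S" and "p \<noteq> g"
  shows "refl g p \<in> pos_roots R S"
proof (rule ccontr)
  assume "refl g p \<notin> pos_roots R S"
  moreover have root: "refl g p \<in> R"
    using g p simple_roots_subset by (intro refl_root) (auto simp: pos_roots_def)
  ultimately have neg: "nonneg_comb S (- refl g p)"
    using root_cases unfolding pos_roots_def by blast
  have off_g: "representation S p h = 0" if h: "h \<in> S" "h \<noteq> g" for h
  proof -
    have "0 \<le> representation S (- refl g p) h"
      using representation_nonneg_comb[OF neg h(1)] by (metis Nats_cases of_nat_0_le_iff)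
    then have "representation S p h \<le> 0"
      using g h by (simp add: representation_neg representation_refl_simple_root)
    then show ?thesis
      using representation_pos_root_nonneg[OF p h(1)] by linarith
  qed
  define c where "c = representation S p g"
  have "p = (\<Sum>h\<in>S. representation S p h *\<^sub>R h)"
    by (rule sum_representation[symmetric])
  also have "\<dots> = (\<Sum>h\<in>S. if h = g then c *\<^sub>R g else 0)"
    using off_g by (intro sum.cong) (auto simp: c_def)
  finally have p_eq: "p = c *\<^sub>R g"
    using g finite_simple_roots by simp
  have "c *\<^sub>R g \<in> R"
    using p p_eq by (simp add: pos_roots_def)
  then have "c = 1 \<or> c = -1"
    using reduced g simple_roots_subset by blast
  moreover have "0 \<le> c"
    using representation_pos_root_nonneg[OF p g] by (simp add: c_def)
  ultimately show False
    using p_eq \<open>p \<noteq> g\<close> by auto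
qed

lemma pos_root_descent:
  assumes p: "p \<in> pos_roots R S"
  obtains g where "g \<in> S" "0 < representation S p g" "0 < g \<bullet> p"
proof -
  have "0 < p \<bullet> p"
    using p inner_root_pos by (simp add: pos_roots_def)
  also have "p \<bullet> p = (\<Sum>g\<in>S. representation S p g * (g \<bullet> p))"
    by (subst (1) sum_representation[symmetric]) (simp add: inner_sum_left)
  finally have "\<exists>g\<in>S. 0 < representation S p g * (g \<bullet> p)"
    using sum_nonpos[of S "\<lambda>g. representation S p g * (g \<bullet> p)"] by (meson not_less)
  then obtain g where g: "g \<in> S" and pos: "0 < representation S p g * (g \<bullet> p)"
    by blast
  have "0 < representation S p g"
    using representation_pos_root_nonneg[OF p g] pos by (auto simp: less_le)
  with g pos show ?thesis
    using that zero_less_mult_pos by blast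
qed

lemma pos_roots_height_induct [consumes 1, case_names less]:
  assumes "p \<in> pos_roots R S"
    and "\<And>p. p \<in> pos_roots R S \<Longrightarrow>
           (\<And>q. q \<in> pos_roots R S \<Longrightarrow> height S q < height S p \<Longrightarrow> P q) \<Longrightarrow> P p"
  shows "P p"
  using finite_pos_roots assms(1) by (induction rule: finite_measure_induct) (rule assms(2))

lemma refl_in_parabolic_weyl:
  assumes "\<delta> \<in> S" "p \<in> pos_roots R S" "representation S p \<delta> = 0"
  shows "refl p \<in> parabolic_weyl S \<delta>"
  using assms(2,3)
proof (induction p rule: pos_roots_height_induct)
  case (less p)
  obtain g where g: "g \<in> S" "0 < representation S p g" "0 < g \<bullet> p"
    using pos_root_descent[OF less.hyps(1)] .
  have "g \<noteq> \<delta>"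
    using g(2) less.prems by auto
  then have refl_g: "refl g \<in> parabolic_weyl S \<delta>"
    unfolding parabolic_weyl_def using g(1) by (intro gen_group_gen) auto
  show ?case
  proof (cases "p = g")
    case True
    with refl_g show ?thesis by simp
  next
    case False
    have "refl (refl g p) \<in> parabolic_weyl S \<delta>"
      using less.IH refl_simple_root_pos[OF g(1) less.hyps(1) False]
        height_refl_simple_root_less[OF g(1,3)] less.prems
        representation_refl_simple_root[OF g(1) assms(1) \<open>g \<noteq> \<delta>\<close>[symmetric]]
      by simp
    then have "refl g \<circ> refl (refl g p) \<circ> refl g \<in> parabolic_weyl S \<delta>"
      using refl_g unfolding parabolic_weyl_def by (intro gen_group_comp)
    then show ?thesis
      by (simp only: refl_refl_conj[of g "refl g p", unfolded refl_refl])
  qed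
qed

lemma simply_laced_pos_root_length:
  assumes "simply_laced R" "\<delta> \<in> S" "p \<in> pos_roots R S" "0 < representation S p \<delta>"
  shows "p \<bullet> p = \<delta> \<bullet> \<delta>"
  using assms(3,4)
proof (induction p rule: pos_roots_height_induct)
  case (less p)
  obtain g where g: "g \<in> S" "0 < representation S p g" "0 < g \<bullet> p"
    using pos_root_descent[OF less.hyps(1)] .
  have roots: "g \<in> R" "p \<in> R"
    using g(1) less.hyps(1) simple_roots_subset by (auto simp: pos_roots_def)
  consider "p = \<delta>" | "p \<noteq> \<delta>" "g = \<delta>" | "g \<noteq> \<delta>"
    by blast
  then show ?case
  proof cases
    case 2
    have "p \<noteq> - g"
    proof
      assume "p = - g"
      then have "g \<bullet> p = - (g \<bullet> g)" by simp
      then show False using g(3) inner_ge_zero[of g] by linarith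
    qed
    moreover have "g \<noteq> - p"
      using calculation by auto
    ultimately have "cpair g p = 1" "cpair p g = 1"
      using cpair_simply_laced[OF assms(1) roots] cpair_simply_laced[OF assms(1) roots(2,1)]
        2 g(3) by (auto simp: inner_commute)
    then show ?thesis
      using inner_self_eq_if_cpair_eq[of p g] g(3) 2 by (simp add: inner_commute)
  next
    case 3
    have "p \<noteq> g"
      using less.prems representation_simple_root[OF g(1)] 3 by auto
    then show ?thesis
      using less.IH[OF refl_simple_root_pos[OF g(1) less.hyps(1)] height_refl_simple_root_less[OF g(1,3)]]
        less.prems representation_refl_simple_root[OF g(1) assms(2)] 3
      by simp
  qed simp
qed

lemma inversion_pos_or_deletion:
  assumes "g \<in> S" "set L \<subseteq> S"
  shows "compose_refl (rev L) g \<in> pos_roots R S \<or> (\<exists>xs v ys. L = xs @ v # ys \<and> compose_refl xs v = g)"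
  using assms(2)
proof (induction L rule: rev_induct)
  case Nil
  then show ?case using simple_root_pos[OF assms(1)] by simp
next
  case (snoc h L)
  show ?case
  proof (cases "compose_refl (rev L) g \<in> pos_roots R S")
    case pos: True
    show ?thesis
    proof (cases "compose_refl (rev L) g = h")
      case True
      then have "compose_refl L h = g" by auto
      then show ?thesis
        by (intro disjI2 exI[of _ L] exI[of _ h] exI[of _ "[]"]) simp
    next
      case False
      then show ?thesis
        using refl_simple_root_pos[OF _ pos] snoc.prems by simp
    qed
  next
    case False
    then obtain xs v ys where "L = xs @ v # ys" "compose_refl xs v = g"
      using snoc by auto
    then show ?thesis
      by (intro disjI2 exI[of _ xs] exI[of _ v] exI[of _ "ys @ [h]"]) simp
  qed
qed

lemma reduced_word_inversion_pos:
  assumes "set gs \<subseteq> S" "weyl_length S (compose_refl gs) = length gs" "k < length gs"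
  shows "compose_refl (rev (drop (Suc k) gs)) (gs ! k) \<in> pos_roots R S"
proof (rule ccontr)
  assume "compose_refl (rev (drop (Suc k) gs)) (gs ! k) \<notin> pos_roots R S"
  moreover have "gs ! k \<in> S"
    using assms(1) nth_mem[OF assms(3)] by (rule subsetD)
  moreover have "set (drop (Suc k) gs) \<subseteq> S"
    using set_drop_subset assms(1) by (rule order.trans)
  ultimately obtain xs v ys where split: "drop (Suc k) gs = xs @ v # ys" "compose_refl xs v = gs ! k"
    using inversion_pos_or_deletion by blast
  then have "gs = take k gs @ gs ! k # xs @ v # ys"
    by (subst (1) id_take_nth_drop[OF assms(3)]) simp
  then have "compose_refl gs = compose_refl (take k gs @ gs ! k # xs @ v # ys)"
    by (rule arg_cong)
  also have "\<dots> = compose_refl (take k gs @ xs @ ys)"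
    by (simp only: compose_refl_append[of "take k gs"] compose_refl_deletion[OF split(2)])
  finally have "weyl_length S (compose_refl gs) = weyl_length S (compose_refl (take k gs @ xs @ ys))"
    by simp
  also have "\<dots> \<le> length (take k gs @ xs @ ys)"
    using assms(1) split(1) set_drop_subset[of "Suc k" gs] set_take_subset[of k gs]
    by (intro weyl_length_le) auto
  also have "\<dots> < length gs"
    using arg_cong[OF split(1), of length] assms(3) by simp
  finally show False
    using assms(2) by simp
qed

lemma minimal_in_coset_inversion_delta_pos:
  assumes "\<delta> \<in> S" "set gs \<subseteq> S" "weyl_length S (compose_refl gs) = length gs" "k < length gs"
    and coset: "compose_refl gs \<in> left_coset w (parabolic_weyl S \<delta>)"
    and minimal: "\<forall>\<psi>\<in>left_coset w (parabolic_weyl S \<delta>). weyl_length S (compose_refl gs) \<le> weyl_length S \<psi>"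
  shows "0 < representation S (compose_refl (rev (drop (Suc k) gs)) (gs ! k)) \<delta>"
proof (rule ccontr)
  define \<psi> where "\<psi> = compose_refl (rev (drop (Suc k) gs)) (gs ! k)"
  assume "\<not> 0 < representation S (compose_refl (rev (drop (Suc k) gs)) (gs ! k)) \<delta>"
  moreover have pos: "\<psi> \<in> pos_roots R S"
    unfolding \<psi>_def using reduced_word_inversion_pos[OF assms(2-4)] .
  ultimately have "representation S \<psi> \<delta> = 0"
    using representation_pos_root_nonneg[OF pos assms(1)] by (simp add: \<psi>_def)
  then have "compose_refl gs \<circ> refl \<psi> \<in> left_coset w (parabolic_weyl S \<delta>)"
    using coset refl_in_parabolic_weyl[OF assms(1) pos] unfolding parabolic_weyl_def
    by (intro left_coset_gen_group_comp)
  then have "weyl_length S (compose_refl gs) \<le> weyl_length S (compose_refl gs \<circ> refl \<psi>)"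
    by (rule bspec[OF minimal])
  also have "compose_refl gs \<circ> refl \<psi> = compose_refl (take k gs @ drop (Suc k) gs)"
    unfolding \<psi>_def
    by (subst (1) id_take_nth_drop[OF assms(4)]) (rule compose_refl_comp_refl_inversion)
  also have "weyl_length S \<dots> \<le> length (take k gs @ drop (Suc k) gs)"
    using assms(2) set_take_subset[of k gs] set_drop_subset[of "Suc k" gs]
    by (intro weyl_length_le) auto
  finally show False
    using assms(3,4) by simp
qed

end

(* For the simple root delta of varpi these are the roots of the unipotent radical of P_varpi. *)
definition radical_roots :: "'a::euclidean_space set \<Rightarrow> 'a set \<Rightarrow> 'a \<Rightarrow> 'a set" where
  "radical_roots R S \<delta> = {p \<in> pos_roots R S. 0 < representation S p \<delta>}"

locale minuscule_root_system = based_root_system +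
  fixes \<delta> \<omega> :: "'a::euclidean_space"
  assumes simply_laced: "simply_laced R" and minuscule: "minuscule_fund_weight R S \<delta> \<omega>"
begin

lemma minuscule_simple_root: "\<delta> \<in> S"
  using minuscule by (simp add: minuscule_fund_weight_def)

lemma inner_minuscule_weight: "v \<bullet> \<omega> = representation S v \<delta> * (\<delta> \<bullet> \<delta> / 2)"
proof -
  have weight: "g \<bullet> \<omega> = (if g = \<delta> then \<delta> \<bullet> \<delta> / 2 else 0)" if "g \<in> S" for g
    using minuscule that inner_root_pos[of g] simple_roots_subset
    by (auto simp: minuscule_fund_weight_def cpair_def field_simps)
  have "v \<bullet> \<omega> = (\<Sum>g\<in>S. representation S v g * (g \<bullet> \<omega>))"
    by (subst (1) sum_representation[symmetric]) (simp add: inner_sum_left)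
  also have "\<dots> = (\<Sum>g\<in>S. if g = \<delta> then representation S v \<delta> * (\<delta> \<bullet> \<delta> / 2) else 0)"
    using weight by (intro sum.cong) auto
  finally show ?thesis
    using finite_simple_roots minuscule_simple_root by simp
qed

lemma cpair_minuscule_weight:
  "v \<bullet> v = \<delta> \<bullet> \<delta> \<Longrightarrow> cpair v \<omega> = representation S v \<delta>"
  using inner_root_pos[of \<delta>] minuscule_simple_root simple_roots_subset
  by (auto simp: cpair_def inner_minuscule_weight)

lemma radical_root_length: "p \<in> radical_roots R S \<delta> \<Longrightarrow> p \<bullet> p = \<delta> \<bullet> \<delta>"
  using simply_laced_pos_root_length[OF simply_laced minuscule_simple_root] by (simp add: radical_roots_def)

lemma radical_root_neg: "p \<in> radical_roots R S \<delta> \<Longrightarrow> - p \<notin> radical_roots R S \<delta>"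
  by (simp add: radical_roots_def representation_neg)

lemma cpair_radical_roots_nonneg:
  assumes p: "p \<in> radical_roots R S \<delta>" and q: "q \<in> radical_roots R S \<delta>"
  shows "0 \<le> cpair p q"
proof (rule ccontr)
  assume "\<not> 0 \<le> cpair p q"
  have roots: "p \<in> R" "q \<in> R"
    using p q by (auto simp: radical_roots_def pos_roots_def)
  have "q \<noteq> p"
    using \<open>\<not> 0 \<le> cpair p q\<close> cpair_root_self[OF roots(1)] by auto
  moreover have "q \<noteq> - p"
    using radical_root_neg[OF p] q by auto
  ultimately have "cpair p q = sgn (p \<bullet> q)"
    by (rule cpair_simply_laced[OF simply_laced roots])
  then have "cpair p q = -1"
    using \<open>\<not> 0 \<le> cpair p q\<close> by (auto simp: sgn_if split: if_split_asm)
  then have "p \<bullet> q = - (\<delta> \<bullet> \<delta>) / 2"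
    using radical_root_length[OF p] inner_root_pos[OF roots(1)] by (simp add: cpair_def field_simps)
  then have length: "(p + q) \<bullet> (p + q) = \<delta> \<bullet> \<delta>"
    using radical_root_length[OF p] radical_root_length[OF q]
    by (simp add: inner_add_left inner_add_right inner_commute)
  have "refl p q = p + q"
    using \<open>cpair p q = -1\<close> by (simp add: refl_def)
  then have "p + q \<in> R"
    using refl_root[OF roots] by simp
  moreover have "nonneg_comb S (p + q)"
    using p q by (intro nonneg_comb_add) (auto simp: radical_roots_def pos_roots_def)
  ultimately have "p + q \<in> pos_roots R S"
    by (simp add: pos_roots_def)
  then have "cpair (p + q) \<omega> \<le> 1"
    using minuscule by (simp add: minuscule_fund_weight_def)
  moreover have "1 \<le> representation S p \<delta>" "1 \<le> representation S q \<delta>"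
    using p q representation_pos_root_ge_1 minuscule_simple_root by (auto simp: radical_roots_def)
  ultimately show False
    using cpair_minuscule_weight[OF length] by (simp add: representation_add)
qed

lemma cpair_refl_radical_roots:
  assumes "p \<in> radical_roots R S \<delta>" "q \<in> radical_roots R S \<delta>" "r \<in> radical_roots R S \<delta>"
    and "cpair p q = 1"
  shows "-1 \<le> cpair p (refl q r)"
proof -
  have roots: "q \<in> R" "r \<in> R"
    using assms(2,3) by (auto simp: radical_roots_def pos_roots_def)
  have eq: "cpair p (refl q r) = cpair p r - cpair q r"
    using assms(4) by (simp add: refl_def cpair_diff_right cpair_scaleR_right)
  show ?thesis
  proof (cases "r = q")
    case True
    then show ?thesis
      using eq assms(4) cpair_root_self[OF roots(1)] by simp
  next
    case False
    moreover have "r \<noteq> - q"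
      using radical_root_neg[OF assms(2)] assms(3) by auto
    ultimately have "\<bar>cpair q r\<bar> \<le> 1"
      using cpair_simply_laced[OF simply_laced roots] by (simp add: abs_sgn_eq)
    then show ?thesis
      using eq cpair_radical_roots_nonneg[OF assms(1,3)] by simp
  qed
qed

end

theorem mainTheorem6:
  fixes R S :: "'a::euclidean_space set"
    and w0 \<phi> :: "'a \<Rightarrow> 'a" and \<phi>bar :: "('a \<Rightarrow> 'a) set"
    and \<delta> \<omega> :: 'a and gs :: "'a list" and n i x :: nat
  assumes "root_system R" and "is_base R S" and "simply_laced R"
    and "w0 \<in> weyl R" and "\<forall>w\<in>weyl R. weyl_length S w \<le> weyl_length S w0"
    and "minuscule_fund_weight R S \<delta> \<omega>"
    and "\<exists>w\<in>weyl R. \<phi>bar = left_coset w (parabolic_weyl S \<delta>)"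
    and "\<phi> \<in> \<phi>bar" and "\<forall>\<psi>\<in>\<phi>bar. weyl_length S \<phi> \<le> weyl_length S \<psi>"
    and "set gs \<subseteq> S" and "length gs = n" and "\<phi> = compose_refl gs"
    and "weyl_length S \<phi> = n"
  defines "bs \<equiv> map (\<lambda>\<gamma>. - w0 \<gamma>) gs"
  defines "\<alpha> \<equiv> (\<lambda>k. compose_refl (take k bs) (bs ! k))"
  assumes "i < n" and "x < n" and "cpair (\<alpha> i) (\<alpha> x) = 1"
  shows "\<forall>j<n. cpair (\<alpha> i) (refl (\<alpha> x) (\<alpha> j)) \<ge> -1"
proof -
  interpret minuscule_root_system R S \<delta> \<omega>
    using assms(1-3,6) by unfold_locales
  obtain w where coset: "\<phi>bar = left_coset w (parabolic_weyl S \<delta>)"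
    using assms(7) by blast
  define \<psi> where "\<psi> k = compose_refl (rev (drop (Suc k) gs)) (gs ! k)" for k
  define T where "T = w0 \<circ> compose_refl gs"
  have T: "orthogonal_transformation T"
    unfolding T_def using orthogonal_transformation_weyl[OF assms(4)]
    by (intro orthogonal_transformation_compose orthogonal_transformation_compose_refl)
  have \<alpha>: "\<alpha> k = T (\<psi> k)" if "k < n" for k
    using compose_refl_map_neg_nth[OF orthogonal_transformation_weyl[OF assms(4)]] that assms(11)
    by (simp add: \<alpha>_def bs_def \<psi>_def T_def)
  have radical: "\<psi> k \<in> radical_roots R S \<delta>" if "k < n" for k
    using reduced_word_inversion_pos minimal_in_coset_inversion_delta_pos[OF minuscule_simple_root]
      assms(8-13) that coset
    by (simp add: radical_roots_def \<psi>_def)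
  have "cpair (\<psi> i) (\<psi> x) = 1"
    using assms(16-18) \<alpha> orthogonal_transformation_cpair[OF T] by simp
  then have "cpair (\<psi> i) (refl (\<psi> x) (\<psi> j)) \<ge> -1" if "j < n" for j
    using cpair_refl_radical_roots radical assms(16,17) that by blast
  then show ?thesis
    using assms(16,17) \<alpha>
    by (simp add: orthogonal_transformation_refl_conj[OF T, symmetric] orthogonal_transformation_cpair[OF T])
qed

end
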